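(* Let $\alpha\in\Phi_+$. Then: (a) the set $\Phi_+\setminus\operatorname{leg}(h_\alpha)$ is closed; (b) $V_\alpha:=\prod_{\gamma\in\Phi_+\setminus\operatorname{leg}(h_\alpha)}X_\gamma$ is a subgroup of $U$; (c) $X_\alpha\cap[V_\alpha,V_\alpha]=\{1\}$; (d) for each $s\in\mathbb{F}_q^\times$ there is a linear character $\lambda_{\alpha,s}$ of $V_\alpha$ with $\lambda_{\alpha,s}|_{X_\alpha}=\varphi_{\alpha,s}$ and $X_\gamma\subseteq\ker(\lambda_{\alpha,s})$ for every $\gamma\in\Phi_+$ with $\operatorname{ht}(\gamma)>\operatorname{ht}(\alpha)$.
   Context: $q$ is a power of a prime $p$. $\Phi$ is a root system of type $D_4$ with simple roots $\alpha_1,\alpha_2,\alpha_3,\alpha_4$ ($\alpha_3$ central node), positive roots $\Phi_+=\{\alpha_1,\dots,\alpha_{12}\}$ with $\alpha_5=\alpha_1+\alpha_3$, $\alpha_6=\alpha_2+\alpha_3$, $\alpha_7=\alpha_3+\alpha_4$, $\alpha_8=\alpha_1+\alpha_2+\alpha_3$, $\alpha_9=\alpha_1+\alpha_3+\alpha_4$, $\alpha_{10}=\alpha_2+\alpha_3+\alpha_4$, $\alpha_{11}=\alpha_1+\alpha_2+\alpha_3+\alpha_4$, $\alpha_{12}=\alpha_1+\alpha_2+2\alpha_3+\alpha_4$; $\operatorname{ht}$ is the height (sum of coefficients in the simple roots). A nonempty $S\subseteq\Phi$ is closed if for all $\alpha,\beta\in S$, either $\alpha+\beta\in S$ or $\alpha+\beta\notin\Phi$.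 $U=U(q)$ is the Sylow $p$-subgroup of the Chevalley group $D_4(q)$ generated by $x_i(t)$ ($i=1,\dots,12$, $t\in\mathbb{F}_q$), with $x_i(t)x_i(u)=x_i(t+u)$, each element uniquely $x_1(d_1)\cdots x_{12}(d_{12})$, and commutators ($[a,b]=a^{-1}b^{-1}ab$): $[x_1(t),x_3(u)]=x_5(tu)$, $[x_1(t),x_6(u)]=x_8(-tu)$, $[x_1(t),x_7(u)]=x_9(tu)$, $[x_1(t),x_{10}(u)]=x_{11}(-tu)$, $[x_2(t),x_3(u)]=x_6(tu)$, $[x_2(t),x_5(u)]=x_8(-tu)$, $[x_2(t),x_7(u)]=x_{10}(tu)$, $[x_2(t),x_9(u)]=x_{11}(-tu)$, $[x_3(t),x_4(u)]=x_7(tu)$, $[x_3(t),x_{11}(u)]=x_{12}(-tu)$, $[x_4(t),x_5(u)]=x_9(-tu)$, $[x_4(t),x_6(u)]=x_{10}(-tu)$, $[x_4(t),x_8(u)]=x_{11}(-tu)$, $[x_5(t),x_{10}(u)]=x_{12}(-tu)$, $[x_6(t),x_9(u)]=x_{12}(-tu)$, $[x_7(t),x_8(u)]=x_{12}(tu)$, others trivial. $X_{\alpha_i}=\{x_i(t)\}$. Fix a nontrivial linear character $\phi$ of $(\mathbb{F}_q,+)$ and define $\varphi_{\alpha_i,s}:X_{\alpha_i}\to\mathbb{C}^\times$, $x_i(d)\mapsto\phi(sd)$. Hooks: $h_\alpha=\{\gamma\in\Phi_+ : \exists\,\gamma'\in\Phi_+\cup\{0\},\ \gamma+\gamma'=\alpha\}$.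 Arm: $\operatorname{arm}(h_\alpha)=(h_\alpha\cap h_{\alpha_{12}})\setminus\{\alpha\}$ if $\alpha\ne\alpha_{12}$, and $\operatorname{arm}(h_{\alpha_{12}})=\{\alpha_8,\alpha_9,\alpha_{10},\alpha_{11}\}$. Leg: $\operatorname{leg}(h_\alpha)=h_\alpha\setminus(\operatorname{arm}(h_\alpha)\cup\{\alpha\})$. Products of root subgroups over a set of roots are taken in any fixed order. *)

theory Defs
  imports "HOL-Algebra.Algebra" Complex_Main
begin

section \<open>The root system D4 (positive roots indexed 1..12, coefficients w.r.t. simple roots)\<close>

definition pos_root :: "nat \<Rightarrow> int list" where
  "pos_root i = (
     if i = 1 then [1,0,0,0] else if i = 2 then [0,1,0,0] else
     if i = 3 then [0,0,1,0] else if i = 4 then [0,0,0,1] else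
     if i = 5 then [1,0,1,0] else if i = 6 then [0,1,1,0] else
     if i = 7 then [0,0,1,1] else if i = 8 then [1,1,1,0] else
     if i = 9 then [1,0,1,1] else if i = 10 then [0,1,1,1] else
     if i = 11 then [1,1,1,1] else if i = 12 then [1,1,2,1] else [0,0,0,0])"

definition radd :: "int list \<Rightarrow> int list \<Rightarrow> int list" where
  "radd a b = map2 (+) a b"

definition rzero :: "int list" where "rzero = [0,0,0,0]"

definition Phi_plus :: "int list set" where
  "Phi_plus = pos_root ` {1..12}"

definition Phi :: "int list set" where
  "Phi = Phi_plus \<union> (map uminus) ` Phi_plus"

definition ht :: "int list \<Rightarrow> int" where
  "ht r = sum_list r"

definition closed :: "int list set \<Rightarrow> bool" where
  "closed S \<longleftrightarrow> S \<noteq> {} \<and> S \<subseteq> Phi \<and>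
     (\<forall>a\<in>S. \<forall>b\<in>S. radd a b \<in> S \<or> radd a b \<notin> Phi)"

definition hook :: "int list \<Rightarrow> int list set" where
  "hook \<alpha> = {\<gamma>\<in>Phi_plus. \<exists>\<gamma>'\<in>Phi_plus \<union> {rzero}. radd \<gamma> \<gamma>' = \<alpha>}"

definition arm :: "int list \<Rightarrow> int list set" where
  "arm \<alpha> = (if \<alpha> = pos_root 12 then pos_root ` {8,9,10,11}
            else (hook \<alpha> \<inter> hook (pos_root 12)) - {\<alpha>})"

definition leg :: "int list \<Rightarrow> int list set" where
  "leg \<alpha> = hook \<alpha> - (arm \<alpha> \<union> {\<alpha>})"

definition comm :: "('g, 'b) monoid_scheme \<Rightarrow> 'g \<Rightarrow> 'g \<Rightarrow> 'g" where
  "comm G a b = inv\<^bsub>G\<^esub> a \<otimes>\<^bsub>G\<^esub> inv\<^bsub>G\<^esub> b \<otimes>\<^bsub>G\<^esub> a \<otimes>\<^bsub>G\<^esub> b"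

text \<open>Commutator table for i < j: [x_i(t), x_j(u)] = x_k(c t u); None means trivial.\<close>
definition crel :: "nat \<Rightarrow> nat \<Rightarrow> (nat \<times> int) option" where
  "crel i j = (
     if (i,j) = (1,3) then Some (5,1) else if (i,j) = (1,6) then Some (8,-1) else
     if (i,j) = (1,7) then Some (9,1) else if (i,j) = (1,10) then Some (11,-1) else
     if (i,j) = (2,3) then Some (6,1) else if (i,j) = (2,5) then Some (8,-1) else
     if (i,j) = (2,7) then Some (10,1) else if (i,j) = (2,9) then Some (11,-1) else
     if (i,j) = (3,4) then Some (7,1) else if (i,j) = (3,11) then Some (12,-1) else
     if (i,j) = (4,5) then Some (9,-1) else if (i,j) = (4,6) then Some (10,-1) else
     if (i,j) = (4,8) then Some (11,-1) else if (i,j) = (5,10) then Some (12,-1) else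
     if (i,j) = (6,9) then Some (12,-1) else if (i,j) = (7,8) then Some (12,1) else None)"

definition rprod :: "('g, 'b) monoid_scheme \<Rightarrow> (nat \<Rightarrow> 'a \<Rightarrow> 'g) \<Rightarrow> nat list \<Rightarrow> (nat \<Rightarrow> 'a) \<Rightarrow> 'g" where
  "rprod G x is d = foldr (\<lambda>i acc. x i (d i) \<otimes>\<^bsub>G\<^esub> acc) is \<one>\<^bsub>G\<^esub>"

definition is_U_D4 :: "('g, 'b) monoid_scheme \<Rightarrow> (nat \<Rightarrow> 'a::field \<Rightarrow> 'g) \<Rightarrow> bool" where
  "is_U_D4 G x \<longleftrightarrow> group G \<and>
     (\<forall>i\<in>{1..12}. \<forall>t. x i t \<in> carrier G) \<and>
     (\<forall>i\<in>{1..12}. \<forall>t u. x i (t + u) = x i t \<otimes>\<^bsub>G\<^esub> x i u) \<and>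
     (\<forall>i j t u. 1 \<le> i \<and> i < j \<and> j \<le> 12 \<longrightarrow>
        comm G (x i t) (x j u) =
          (case crel i j of None \<Rightarrow> \<one>\<^bsub>G\<^esub> | Some (k, c) \<Rightarrow> x k (of_int c * t * u))) \<and>
     bij_betw (rprod G x [1..<13]) {d. \<forall>i. i \<notin> {1..12} \<longrightarrow> d i = 0} (carrier G)"

definition Xsub :: "(nat \<Rightarrow> 'a \<Rightarrow> 'g) \<Rightarrow> nat \<Rightarrow> 'g set" where
  "Xsub x i = range (x i)"

definition rootprod :: "('g, 'b) monoid_scheme \<Rightarrow> (nat \<Rightarrow> 'a \<Rightarrow> 'g) \<Rightarrow> int list set \<Rightarrow> 'g set" where
  "rootprod G x S = {rprod G x (filter (\<lambda>i. pos_root i \<in> S) [1..<13]) d | d. True}"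

definition nontriv_add_char :: "('a::field \<Rightarrow> complex) \<Rightarrow> bool" where
  "nontriv_add_char \<phi> \<longleftrightarrow> (\<forall>a b. \<phi> (a + b) = \<phi> a * \<phi> b) \<and> (\<forall>a. \<phi> a \<noteq> 0) \<and> (\<exists>a. \<phi> a \<noteq> 1)"

definition lin_char :: "('g, 'b) monoid_scheme \<Rightarrow> 'g set \<Rightarrow> ('g \<Rightarrow> complex) \<Rightarrow> bool" where
  "lin_char G V chi \<longleftrightarrow> (\<forall>g\<in>V. chi g \<noteq> 0) \<and> (\<forall>g\<in>V. \<forall>h\<in>V. chi (g \<otimes>\<^bsub>G\<^esub> h) = chi g * chi h)"

end

theory Submission
  imports Defs
begin

(*
  Every element of U is uniquely x(d) = x_1(d_1) ... x_12(d_12), so U is identified with the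
  coordinate vectors d in F_q^12.  Collecting a product x(d) x(e) with the commutator relations
  gives an explicit polynomial group law: x(d) x(e) = x(d4_mul d e) (lemma xvec_mult).  For a
  set I of indices, coord_subgroup I consists of the x(d) with d vanishing on I.  If the
  vectors vanishing on I are closed under d4_mul and the a-th coordinate is additive on them
  (closed_additive I a), then coord_subgroup I is a subgroup, the a-th coordinate is a
  homomorphism from it onto (F_q,+), hence kills its derived subgroup (derived_in_kernel),
  and composing it with the additive character gives the characters lambda_{a,s}.

  The theorem then takes I = the indices of leg(h_alpha): the product of the root
  subgroups outside the leg is exactly coord_subgroup I.
*)

lemma (in group) derived_in_kernel:
  fixes \<psi> :: "'a \<Rightarrow> 'c::ab_group_add"
  assumes V: "subgroup V G" and hom: "\<And>g h. g \<in> V \<Longrightarrow> h \<in> V \<Longrightarrow> \<psi> (g \<otimes> h) = \<psi> g + \<psi> h"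
  shows "derived G V \<subseteq> {g \<in> V. \<psi> g = 0}"
proof -
  interpret V: subgroup V G by (fact V)
  have one: "\<psi> \<one> = 0"
    using hom[OF V.one_closed V.one_closed] by simp
  have inv: "\<psi> (inv g) = - \<psi> g" if g: "g \<in> V" for g
  proof -
    have "\<psi> g + \<psi> (inv g) = 0"
      using hom[OF g V.m_inv_closed[OF g]] g one by simp
    then show ?thesis by (simp add: eq_neg_iff_add_eq_0 add.commute)
  qed
  have K: "subgroup {g \<in> V. \<psi> g = 0} G"
  proof (rule subgroupI)
    show "{g \<in> V. \<psi> g = 0} \<subseteq> carrier G" using V.subset by auto
    have "\<one> \<in> {g \<in> V. \<psi> g = 0}" using one by simp
    then show "{g \<in> V. \<psi> g = 0} \<noteq> {}" by blast
    show "inv g \<in> {g \<in> V. \<psi> g = 0}" if "g \<in> {g \<in> V. \<psi> g = 0}" for g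
      using that inv by simp
    show "g \<otimes> h \<in> {g \<in> V. \<psi> g = 0}" if "g \<in> {g \<in> V. \<psi> g = 0}" "h \<in> {g \<in> V. \<psi> g = 0}" for g h
      using that hom by simp
  qed
  have "h1 \<otimes> h2 \<otimes> inv h1 \<otimes> inv h2 \<in> {g \<in> V. \<psi> g = 0}" if "h1 \<in> V" "h2 \<in> V" for h1 h2
    using that by (simp add: hom inv)
  then have "derived_set G V \<subseteq> {g \<in> V. \<psi> g = 0}"
    by blast
  then show ?thesis
    unfolding derived_def by (rule generate_subgroup_incl[OF _ K])
qed

lemma (in group) comm_swap:
  assumes "a \<in> carrier G" "b \<in> carrier G"
  shows "b \<otimes> a = a \<otimes> (b \<otimes> inv (comm G a b))"
proof -
  have "a \<otimes> (b \<otimes> inv (comm G a b)) = a \<otimes> (b \<otimes> (inv b \<otimes> (inv a \<otimes> (b \<otimes> a))))"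
    using assms by (simp add: comm_def inv_mult_group m_assoc)
  also have "\<dots> = b \<otimes> a"
    using assms by (simp add: m_assoc[symmetric])
  finally show ?thesis by simp
qed

section \<open>Coordinate vectors and the group law of U\<close>

text \<open>The group law of U in root coordinates: x(d) x(e) = x(d4_mul d e), where
  x(d) = x_1(d_1) ... x_12(d_12) (lemma xvec_mult below).\<close>

definition d4_mul :: "(nat \<Rightarrow> 'a::comm_ring_1) \<Rightarrow> (nat \<Rightarrow> 'a) \<Rightarrow> nat \<Rightarrow> 'a" where
  "d4_mul d e i =
    (if i = 5 then d 5 + e 5 - d 3 * e 1
     else if i = 6 then d 6 + e 6 - d 3 * e 2
     else if i = 7 then d 7 + e 7 - d 4 * e 3
     else if i = 8 then d 8 + e 8 + d 5 * e 2 + d 6 * e 1 - d 3 * e 1 * e 2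
     else if i = 9 then d 9 + e 9 + d 5 * e 4 - d 7 * e 1 - d 3 * d 4 * e 1 - d 3 * e 1 * e 4
     else if i = 10 then d 10 + e 10 + d 6 * e 4 - d 7 * e 2 - d 3 * d 4 * e 2 - d 3 * e 2 * e 4
     else if i = 11 then d 11 + e 11 + d 8 * e 4 + d 9 * e 2 + d 10 * e 1 + d 5 * e 2 * e 4
       + d 6 * e 1 * e 4 - d 7 * e 1 * e 2 - d 3 * d 4 * e 1 * e 2 - d 3 * e 1 * e 2 * e 4
     else if i = 12 then d 12 + e 12 - d 8 * e 7 + d 9 * e 6 + d 10 * e 5 + d 11 * e 3
       + d 5 * d 6 * e 4 - d 5 * d 7 * e 2 - d 5 * e 2 * e 7 + d 5 * e 4 * e 6 - d 6 * d 7 * e 1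
       - d 6 * e 1 * e 7 + d 6 * e 4 * e 5 - d 7 * e 1 * e 6 - d 7 * e 2 * e 5 + d 9 * e 2 * e 3
       + d 10 * e 1 * e 3 - d 3 * d 4 * d 5 * e 2 - d 3 * d 4 * d 6 * e 1 - d 3 * d 4 * e 1 * e 6
       - d 3 * d 4 * e 2 * e 5 - d 3 * d 5 * e 2 * e 4 - d 3 * d 6 * e 1 * e 4
       + d 3 * d 7 * e 1 * e 2 + d 3 * e 1 * e 2 * e 7 - d 3 * e 1 * e 4 * e 6
       - d 3 * e 2 * e 4 * e 5 - d 7 * e 1 * e 2 * e 3 + d 3 ^ 2 * d 4 * e 1 * e 2
       + d 3 ^ 2 * e 1 * e 2 * e 4 - d 3 * d 4 * e 1 * e 2 * e 3
     else d i + e i)"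

definition closed_additive :: "((nat \<Rightarrow> 'a::{plus,zero}) \<Rightarrow> (nat \<Rightarrow> 'a) \<Rightarrow> nat \<Rightarrow> 'a) \<Rightarrow> nat set \<Rightarrow> nat \<Rightarrow> bool"
  where "closed_additive mul I a \<longleftrightarrow>
    (\<forall>d e. (\<forall>i\<in>I. d i = 0) \<longrightarrow> (\<forall>i\<in>I. e i = 0) \<longrightarrow>
      (\<forall>i\<in>I. mul d e i = 0) \<and> mul d e a = d a + e a)"

lemma upt13: "[1..<13] = [1,2,3,4,5,6,7,8,9,10,11,12::nat]"
  by (simp add: upt_rec)

section \<open>The root system: heights, hooks, legs and closedness\<close>

definition RL :: "int list list" where
  "RL = [[1,0,0,0],[0,1,0,0],[0,0,1,0],[0,0,0,1],[1,0,1,0],[0,1,1,0],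
         [0,0,1,1],[1,1,1,0],[1,0,1,1],[0,1,1,1],[1,1,1,1],[1,1,2,1]]"

lemma Phi_plus_RL: "Phi_plus = set RL"
  unfolding Phi_plus_def RL_def atLeastAtMost_upt
  by (auto simp: upt_rec pos_root_def)

lemma pos_root_Phi_plus: "i \<in> {1..12} \<Longrightarrow> pos_root i \<in> Phi_plus"
  unfolding Phi_plus_def by (rule imageI)

lemma ht_radd: "length u = length v \<Longrightarrow> ht (radd u v) = ht u + ht v"
proof (induction u arbitrary: v)
  case (Cons c u)
  then obtain b w where "v = b # w" by (cases v) auto
  with Cons show ?case by (simp add: radd_def ht_def)
qed (simp add: radd_def ht_def)

lemma positive_root_shape: "r \<in> Phi_plus \<Longrightarrow> length r = 4 \<and> ht r > 0"
  unfolding Phi_plus_RL RL_def by (auto simp: ht_def)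

lemma rzero_shape: "length rzero = 4 \<and> ht rzero = 0"
  by (simp add: rzero_def ht_def)

lemma hook_height: "\<gamma> \<in> hook \<alpha> \<Longrightarrow> ht \<gamma> \<le> ht \<alpha>"
proof -
  assume "\<gamma> \<in> hook \<alpha>"
  then obtain \<gamma>' where \<gamma>: "\<gamma> \<in> Phi_plus" and \<gamma>': "\<gamma>' \<in> Phi_plus \<union> {rzero}"
    and sum: "radd \<gamma> \<gamma>' = \<alpha>"
    unfolding hook_def by blast
  have "length \<gamma>' = 4 \<and> ht \<gamma>' \<ge> 0"
    using \<gamma>' positive_root_shape rzero_shape by fastforce
  moreover have "length \<gamma> = 4"
    using positive_root_shape[OF \<gamma>] by simp
  ultimately show ?thesis
    using ht_radd[of \<gamma> \<gamma>'] sum by simp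
qed

lemma higher_root_not_in_leg: "ht \<alpha> < ht \<gamma> \<Longrightarrow> \<gamma> \<notin> leg \<alpha>"
  using hook_height unfolding leg_def by fastforce

text \<open>A sum of two positive roots that is a root is a positive root (negative roots have
  negative height).\<close>

lemma positive_sum_root:
  assumes u: "u \<in> Phi_plus" and v: "v \<in> Phi_plus" and root: "radd u v \<in> Phi"
  shows "radd u v \<in> Phi_plus"
proof (rule ccontr)
  assume "radd u v \<notin> Phi_plus"
  with root obtain r where r: "r \<in> Phi_plus" "radd u v = map uminus r"
    unfolding Phi_def by blast
  have "ht (map uminus r) = - ht r"
    unfolding ht_def by (induction r) simp_all
  then show False
    using r ht_radd[of u v] positive_root_shape[OF u] positive_root_shape[OF v]
      positive_root_shape[OF r(1)] by simp
qed

lemma radd_sub: "length u = length v \<Longrightarrow> radd u (map2 (-) v u) = v"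
  by (induction u v rule: list_induct2) (simp_all add: radd_def)

lemma sub_radd: "length u = length v \<Longrightarrow> map2 (-) (radd u v) u = v"
  by (induction u v rule: list_induct2) (simp_all add: radd_def)

lemma mem_hook:
  assumes \<alpha>: "length \<alpha> = 4"
  shows "\<gamma> \<in> hook \<alpha> \<longleftrightarrow> \<gamma> \<in> set RL \<and> map2 (-) \<alpha> \<gamma> \<in> set (rzero # RL)"
proof -
  have "(\<exists>\<gamma>'\<in>Phi_plus \<union> {rzero}. radd \<gamma> \<gamma>' = \<alpha>) \<longleftrightarrow> map2 (-) \<alpha> \<gamma> \<in> Phi_plus \<union> {rzero}"
    if \<gamma>: "\<gamma> \<in> Phi_plus"
  proof -
    have len: "length \<gamma>' = length \<gamma>" if "\<gamma>' \<in> Phi_plus \<union> {rzero}" for \<gamma>'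
      using that positive_root_shape[OF \<gamma>] positive_root_shape rzero_shape by auto
    show ?thesis
      using radd_sub[of \<gamma> \<alpha>] sub_radd[of \<gamma>] len \<alpha> positive_root_shape[OF \<gamma>] by metis
  qed
  then show ?thesis
    unfolding hook_def Phi_plus_RL by auto
qed

lemma closed_complement:
  assumes L: "L \<subseteq> Phi_plus" and \<alpha>: "\<alpha> \<in> Phi_plus - L"
    and split: "\<And>\<gamma> u. \<gamma> \<in> L \<Longrightarrow> u \<in> Phi_plus \<Longrightarrow> map2 (-) \<gamma> u \<in> Phi_plus \<Longrightarrow>
      u \<in> L \<or> map2 (-) \<gamma> u \<in> L"
  shows "closed (Phi_plus - L)"
proof -
  have "radd u v \<in> Phi_plus - L \<or> radd u v \<notin> Phi" if u: "u \<in> Phi_plus - L" and v: "v \<in> Phi_plus - L" for u v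
  proof (rule disjCI)
    assume "\<not> radd u v \<notin> Phi"
    then have "radd u v \<in> Phi_plus"
      using positive_sum_root u v by blast
    moreover have "map2 (-) (radd u v) u = v"
      using sub_radd positive_root_shape u v by simp
    ultimately show "radd u v \<in> Phi_plus - L"
      using split[of "radd u v" u] u v by auto
  qed
  moreover have "Phi_plus - L \<noteq> {}" using \<alpha> by blast
  moreover have "Phi_plus - L \<subseteq> Phi" unfolding Phi_def by blast
  ultimately show ?thesis unfolding closed_def by blast
qed

text \<open>Weak congruence rules: with them the simplifier evaluates map, filter and list_all over
  an explicit list element by element instead of rewriting under the binder first.\<close>

lemma map_weak_cong: "xs = ys \<Longrightarrow> map f xs = map f ys"
  and filter_weak_cong: "xs = ys \<Longrightarrow> filter P xs = filter P ys"
  and list_all_weak_cong: "xs = ys \<Longrightarrow> list_all P xs = list_all P ys"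
  by simp_all

definition leg_index :: "nat \<Rightarrow> nat set" where
  "leg_index a = {i \<in> {1..12}. pos_root i \<in> leg (pos_root a)}"

definition leg_table :: "nat list list" where
  "leg_table = [[], [], [], [], [1], [2], [4], [1,2], [1,4], [2,4], [1,2,4], [3,5,6,7]]"

lemma leg_index_table: "map leg_index [1..<13] = map set leg_table"
proof -
  have "leg_index a = set (filter (\<lambda>i. pos_root i \<in> leg (pos_root a)) [1..<13])" for a
    unfolding leg_index_def by auto
  then show ?thesis
    unfolding upt13 leg_table_def
    by (simp cong: map_weak_cong filter_weak_cong
        add: mem_hook leg_def arm_def RL_def pos_root_def rzero_def)
qed

lemma list_all_zip_lookup:
  assumes "length xs = length ys" "map f xs = map g ys" "list_all P (zip xs ys)" "x \<in> set xs"
  shows "\<exists>y. f x = g y \<and> P (x, y)"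
  using assms by (induction xs ys rule: list_induct2) auto

lemma leg_table_instance:
  assumes "list_all P (zip [1..<13] leg_table)" and "a \<in> {1..12}"
  obtains L where "leg_index a = set L" and "P (a, L)"
proof -
  have "length [1..<13] = length leg_table" by (simp add: leg_table_def)
  moreover have "a \<in> set [1..<13]" using assms(2) by auto
  ultimately show ?thesis
    using list_all_zip_lookup[OF _ leg_index_table assms(1)] that by blast
qed

lemma leg_image: "leg (pos_root a) = pos_root ` leg_index a"
proof -
  have "leg (pos_root a) \<subseteq> Phi_plus"
    unfolding leg_def hook_def by blast
  then show ?thesis
    unfolding leg_index_def Phi_plus_def by blast
qed

lemma leg_index_complement:
  "{i \<in> {1..12}. pos_root i \<notin> Phi_plus - leg (pos_root a)} = leg_index a"
  unfolding leg_index_def using pos_root_Phi_plus by blast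

text \<open>Only elements of legs
  that are sums of two positive roots matter, and for each of them one summand lies in the
  leg as well (a finite check on the table).\<close>

lemma closed_leg_complement:
  assumes a: "a \<in> {1..12}"
  shows "closed (Phi_plus - leg (pos_root a))"
proof (rule closed_complement)
  show "leg (pos_root a) \<subseteq> Phi_plus"
    unfolding leg_def hook_def by blast
  show "pos_root a \<in> Phi_plus - leg (pos_root a)"
    using pos_root_Phi_plus[OF a] unfolding leg_def by blast
  let ?split = "\<lambda>(a::nat, L). list_all (\<lambda>\<gamma>. list_all (\<lambda>u.
      map2 (-) \<gamma> u \<in> set RL \<longrightarrow> u \<in> set (map pos_root L) \<or> map2 (-) \<gamma> u \<in> set (map pos_root L))
      RL) (map pos_root L)"
  have "list_all ?split (zip [1..<13] leg_table)"
    unfolding upt13 leg_table_def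
    by (simp cong: list_all_weak_cong add: RL_def pos_root_def)
  then obtain L where L: "leg_index a = set L" and "?split (a, L)"
    using leg_table_instance a by blast
  then have "\<forall>\<gamma>\<in>leg (pos_root a). \<forall>u\<in>Phi_plus. map2 (-) \<gamma> u \<in> Phi_plus \<longrightarrow>
      u \<in> leg (pos_root a) \<or> map2 (-) \<gamma> u \<in> leg (pos_root a)"
    unfolding leg_image L Phi_plus_RL list_all_iff by simp
  then show "u \<in> leg (pos_root a) \<or> map2 (-) \<gamma> u \<in> leg (pos_root a)"
    if "\<gamma> \<in> leg (pos_root a)" "u \<in> Phi_plus" "map2 (-) \<gamma> u \<in> Phi_plus" for \<gamma> u
    using that by blast
qed

text \<open>On the coordinate vectors vanishing on a leg the group law is closed and additive at a:
  no collection of two such elements produces a term in X_a or in the leg.\<close>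

lemma closed_additive_leg:
  "a \<in> {1..12} \<Longrightarrow> closed_additive (d4_mul :: _ \<Rightarrow> _ \<Rightarrow> _ \<Rightarrow> 'a::comm_ring_1) (leg_index a) a"
proof -
  assume a: "a \<in> {1..12}"
  let ?law = "\<lambda>(a, L). closed_additive (d4_mul :: _ \<Rightarrow> _ \<Rightarrow> _ \<Rightarrow> 'a) (set L) a"
  have "list_all ?law (zip [1..<13] leg_table)"
    unfolding upt13 leg_table_def
    by (simp cong: list_all_weak_cong add: closed_additive_def d4_mul_def)
  then obtain L where "leg_index a = set L" and "?law (a, L)"
    using leg_table_instance a by blast
  then show ?thesis by simp
qed

section \<open>Root coordinates on U\<close>

definition coord_space :: "(nat \<Rightarrow> 'a::zero) set" where
  "coord_space = {d. \<forall>i. i \<notin> {1..12} \<longrightarrow> d i = 0}"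

locale UD4 =
  fixes G :: "('g, 'b) monoid_scheme" (structure) and x :: "nat \<Rightarrow> 'a::field \<Rightarrow> 'g"
  assumes U: "is_U_D4 G x"
begin

sublocale group G using U unfolding is_U_D4_def by blast

abbreviation coord_mul :: "(nat \<Rightarrow> 'a) \<Rightarrow> (nat \<Rightarrow> 'a) \<Rightarrow> nat \<Rightarrow> 'a" where
  "coord_mul \<equiv> d4_mul"

lemma x_closed[simp]: "i \<in> {1..12} \<Longrightarrow> x i t \<in> carrier G"
  using U unfolding is_U_D4_def by blast

lemma x_add: "i \<in> {1..12} \<Longrightarrow> x i t \<otimes> x i u = x i (t + u)"
  using U unfolding is_U_D4_def by metis

lemma x_zero[simp]: "i \<in> {1..12} \<Longrightarrow> x i 0 = \<one>"
  by (metis add_0 l_cancel one_closed r_one x_add x_closed)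

lemma x_inv: "i \<in> {1..12} \<Longrightarrow> inv (x i t) = x i (- t)"
  by (metis add.left_inverse inv_equality x_zero x_add x_closed)

lemma comm_x: "1 \<le> i \<Longrightarrow> i < j \<Longrightarrow> j \<le> 12 \<Longrightarrow>
   comm G (x i t) (x j u) = (case crel i j of None \<Rightarrow> \<one> | Some (k, c) \<Rightarrow> x k (of_int c * t * u))"
  using U unfolding is_U_D4_def by blast

lemma crel_target: "crel i j = Some (k, c) \<Longrightarrow> k \<in> {1..12}"
  by (simp add: crel_def split: if_splits)

text \<open>The inverse commutator of x_i(t) and x_j(u), as produced when x_i(t) passes x_j(u).\<close>

definition comm_corr :: "nat \<Rightarrow> nat \<Rightarrow> 'a \<Rightarrow> 'a \<Rightarrow> 'g" where
  "comm_corr i j t u = (case crel i j of None \<Rightarrow> \<one> | Some (k, c) \<Rightarrow> x k (- (of_int c * t * u)))"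

lemma comm_corr_closed: "comm_corr i j t u \<in> carrier G"
  by (auto simp: comm_corr_def split: option.split dest: crel_target)

lemma x_swap:
  assumes "1 \<le> i" "i < j" "j \<le> 12"
  shows "x j u \<otimes> x i t = x i t \<otimes> (x j u \<otimes> comm_corr i j t u)"
  using comm_swap[OF x_closed[of i t] x_closed[of j u]] comm_x[OF assms, of t u] assms
  by (auto simp: x_inv comm_corr_def split: option.splits dest: crel_target)

lemma x_swap_assoc:
  assumes "1 \<le> i" "i < j" "j \<le> 12" "r \<in> carrier G"
  shows "x j u \<otimes> (x i t \<otimes> r) = x i t \<otimes> (x j u \<otimes> (comm_corr i j t u \<otimes> r))"
  using x_swap[OF assms(1-3), of u t] assms comm_corr_closed
  by (simp add: m_assoc[symmetric])

lemma x_add_assoc: "i \<in> {1..12} \<Longrightarrow> r \<in> carrier G \<Longrightarrow> x i t \<otimes> (x i u \<otimes> r) = x i (t + u) \<otimes> r"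
  by (simp add: m_assoc[symmetric] x_add)

lemmas collect = x_swap x_swap_assoc x_add x_add_assoc comm_corr_def

lemma rprod_Cons[simp]: "rprod G x (i # L) d = x i (d i) \<otimes> rprod G x L d"
  by (simp add: rprod_def)

lemma rprod_Nil[simp]: "rprod G x [] d = \<one>"
  by (simp add: rprod_def)

lemma rprod_closed: "set L \<subseteq> {1..12} \<Longrightarrow> rprod G x L d \<in> carrier G"
  by (induction L) auto

lemma rprod_cong: "(\<And>i. i \<in> set L \<Longrightarrow> d i = d' i) \<Longrightarrow> rprod G x L d = rprod G x L d'"
  by (induction L) auto

lemma rprod_zero: "set L \<subseteq> {1..12} \<Longrightarrow> rprod G x L (\<lambda>i. 0) = \<one>"
  by (induction L) auto

lemma rprod_filter:
  "set L \<subseteq> {1..12} \<Longrightarrow> rprod G x (filter P L) d = rprod G x L (\<lambda>i. if P i then d i else 0)"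
  by (induction L) (auto simp: rprod_closed)

lemma rprod_single:
  "set L \<subseteq> {1..12} \<Longrightarrow> distinct L \<Longrightarrow> j \<in> set L \<Longrightarrow> rprod G x L (\<lambda>i. if i = j then t else 0) = x j t"
proof (induction L)
  case (Cons i L)
  show ?case
  proof (cases "i = j")
    case True
    with Cons.prems have "rprod G x L (\<lambda>i. if i = j then t else 0) = rprod G x L (\<lambda>i. 0)"
      by (intro rprod_cong) auto
    with True Cons.prems show ?thesis by (simp add: rprod_zero)
  next
    case False
    with Cons.prems have "j \<in> {1..12}" by auto
    with False Cons show ?thesis by (simp add: rprod_closed)
  qed
qed simp

definition xvec :: "(nat \<Rightarrow> 'a) \<Rightarrow> 'g" where
  "xvec = rprod G x [1..<13]"

lemma xvec_cong: "(\<And>i. i \<in> {1..12} \<Longrightarrow> d i = d' i) \<Longrightarrow> xvec d = xvec d'"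
  unfolding xvec_def by (rule rprod_cong) auto

lemma x_eq_xvec: "j \<in> {1..12} \<Longrightarrow> x j t = xvec (\<lambda>i. if i = j then t else 0)"
  unfolding xvec_def by (rule rprod_single[symmetric]) auto

text \<open>The group law of U in coordinates: collect the product of two normal forms into normal
  form, then compare the two normal forms coordinatewise.\<close>

lemma x_cong: "t = u \<Longrightarrow> x i t = x i u"
  and x_mult_cong: "t = u \<Longrightarrow> r = r' \<Longrightarrow> x i t \<otimes> r = x i u \<otimes> r'"
  by simp_all

lemma xvec_mult: "xvec d \<otimes> xvec e = xvec (d4_mul d e)"
  unfolding xvec_def upt13
  apply (simp add: collect m_assoc crel_def del: One_nat_def)
  apply (intro x_mult_cong x_cong)
  by (simp_all add: d4_mul_def power2_eq_square algebra_simps)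

definition coord :: "'g \<Rightarrow> nat \<Rightarrow> 'a" where
  "coord g = the_inv_into coord_space xvec g"

lemma coord_xvec: "i \<in> {1..12} \<Longrightarrow> coord (xvec d) i = d i"
proof -
  assume i: "i \<in> {1..12}"
  define d' where "d' j = (if j \<in> {1..12} then d j else 0)" for j
  have d': "d' \<in> coord_space" by (simp add: coord_space_def d'_def)
  have "xvec d = xvec d'"
    by (rule xvec_cong) (simp add: d'_def)
  moreover have "inj_on xvec coord_space"
    using U by (simp add: is_U_D4_def coord_space_def bij_betw_def xvec_def)
  ultimately have "coord (xvec d) = d'"
    unfolding coord_def by (simp add: the_inv_into_f_f[OF _ d'])
  then show ?thesis using i by (simp add: d'_def)
qed

lemma coord_x: "i \<in> {1..12} \<Longrightarrow> j \<in> {1..12} \<Longrightarrow> coord (x j t) i = (if i = j then t else 0)"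
  unfolding x_eq_xvec[of j t] by (rule coord_xvec)

definition coord_subgroup :: "nat set \<Rightarrow> 'g set" where
  "coord_subgroup I = {xvec d | d. \<forall>i\<in>I. d i = 0}"

lemma rootprod_eq_coord_subgroup:
  "rootprod G x S = coord_subgroup {i \<in> {1..12}. pos_root i \<notin> S}"
proof -
  let ?P = "\<lambda>i. pos_root i \<in> S" and ?I = "{i \<in> {1..12}. pos_root i \<notin> S}"
  let ?restr = "\<lambda>d i. if ?P i then d i else 0"
  have filter: "rprod G x (filter ?P [1..<13]) d = xvec (?restr d)" for d
    unfolding xvec_def by (rule rprod_filter) auto
  show ?thesis
  proof (intro equalityI subsetI)
    fix g assume "g \<in> rootprod G x S"
    then obtain d where "g = xvec (?restr d)"
      unfolding rootprod_def filter by blast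
    moreover have "\<forall>i\<in>?I. ?restr d i = 0" by simp
    ultimately show "g \<in> coord_subgroup ?I"
      unfolding coord_subgroup_def by blast
  next
    fix g assume "g \<in> coord_subgroup ?I"
    then obtain d where g: "g = xvec d" and d: "\<forall>i\<in>?I. d i = 0"
      unfolding coord_subgroup_def by blast
    have "xvec d = xvec (?restr d)"
      using d by (intro xvec_cong) auto
    then have "g = rprod G x (filter ?P [1..<13]) d"
      unfolding g filter .
    then show "g \<in> rootprod G x S"
      unfolding rootprod_def by blast
  qed
qed

lemma x_in_coord_subgroup: "j \<in> {1..12} \<Longrightarrow> (j \<in> I \<Longrightarrow> t = 0) \<Longrightarrow> x j t \<in> coord_subgroup I"
  unfolding coord_subgroup_def x_eq_xvec[of j t]
  by (rule CollectI, rule exI[of _ "\<lambda>i. if i = j then t else 0"]) auto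

lemma coord_subgroup_mult:
  assumes law: "closed_additive coord_mul I a"
    and g: "g \<in> coord_subgroup I" and h: "h \<in> coord_subgroup I"
  shows "g \<otimes> h \<in> coord_subgroup I"
    and "a \<in> {1..12} \<Longrightarrow> coord (g \<otimes> h) a = coord g a + coord h a"
proof -
  obtain d e where d: "g = xvec d" "\<forall>i\<in>I. d i = 0" and e: "h = xvec e" "\<forall>i\<in>I. e i = 0"
    using g h unfolding coord_subgroup_def by blast
  have gh: "g \<otimes> h = xvec (coord_mul d e)"
    using d e xvec_mult by simp
  have law_de: "(\<forall>i\<in>I. coord_mul d e i = 0) \<and> coord_mul d e a = d a + e a"
    using law d(2) e(2) unfolding closed_additive_def by blast
  then show "g \<otimes> h \<in> coord_subgroup I"
    unfolding coord_subgroup_def gh by blast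
  show "coord (g \<otimes> h) a = coord g a + coord h a" if a: "a \<in> {1..12}"
  proof -
    have "coord (g \<otimes> h) a = coord_mul d e a"
      unfolding gh using a by (rule coord_xvec)
    then show ?thesis
      using law_de a by (simp add: d(1) e(1) coord_xvec)
  qed
qed

text \<open>Inverses are products of root elements in reverse order, so the coordinate subgroup is a
  subgroup: part (b).\<close>

lemma coord_subgroup_is_subgroup:
  assumes law: "closed_additive coord_mul I a"
  shows "subgroup (coord_subgroup I) G"
proof -
  let ?V = "coord_subgroup I"
  have one: "\<one> \<in> ?V"
    using x_in_coord_subgroup[of 1 I 0] by simp
  have inv_rprod: "inv (rprod G x L d) \<in> ?V" if "set L \<subseteq> {1..12}" "\<forall>i\<in>I. d i = 0" for L d
    using that(1)
  proof (induction L)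
    case (Cons i L)
    then have "inv (rprod G x (i # L) d) = inv (rprod G x L d) \<otimes> x i (- d i)"
      by (simp add: inv_mult_group rprod_closed x_inv)
    moreover have "x i (- d i) \<in> ?V"
      using Cons.prems that(2) by (intro x_in_coord_subgroup) auto
    ultimately show ?case
      using Cons coord_subgroup_mult(1)[OF law] by simp
  qed (simp add: one)
  show ?thesis
  proof (rule subgroupI)
    show "?V \<subseteq> carrier G"
      unfolding coord_subgroup_def xvec_def by (auto intro: rprod_closed)
    show "?V \<noteq> {}" using one by blast
    show "inv g \<in> ?V" if g: "g \<in> ?V" for g
    proof -
      obtain d where "g = xvec d" "\<forall>i\<in>I. d i = 0"
        using g unfolding coord_subgroup_def by blast
      moreover have "set [1..<13] \<subseteq> {1..12::nat}" by auto
      ultimately show ?thesis using inv_rprod[of "[1..<13]" d] unfolding xvec_def by simp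
    qed
    show "g \<otimes> h \<in> ?V" if "g \<in> ?V" "h \<in> ?V" for g h
      using coord_subgroup_mult(1)[OF law that] .
  qed
qed

text \<open>The a-th coordinate is a homomorphism from the coordinate subgroup to (F_q,+); hence the
  derived subgroup meets the root subgroup X_a trivially: part (c).\<close>

lemma root_subgroup_meets_derived_trivially:
  assumes law: "closed_additive coord_mul I a" and a: "a \<in> {1..12}"
  shows "Xsub x a \<inter> derived G (coord_subgroup I) = {\<one>}"
proof -
  have kernel: "derived G (coord_subgroup I) \<subseteq> {g \<in> coord_subgroup I. coord g a = 0}"
    using coord_subgroup_mult(2)[OF law _ _ a]
    by (intro derived_in_kernel[where \<psi> = "\<lambda>g. coord g a"] coord_subgroup_is_subgroup[OF law])
  have "g = \<one>" if g: "g \<in> Xsub x a" and gd: "g \<in> derived G (coord_subgroup I)" for g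
  proof -
    obtain t where t: "g = x a t" using g unfolding Xsub_def by blast
    have "coord g a = 0" using gd kernel by blast
    then have "t = 0" using coord_x[OF a a] t by simp
    then show ?thesis using t a by simp
  qed
  then have "Xsub x a \<inter> derived G (coord_subgroup I) \<subseteq> {\<one>}"
    by blast
  moreover have "\<one> \<in> Xsub x a"
    using x_zero[OF a] unfolding Xsub_def by (metis rangeI)
  moreover have "\<one> \<in> derived G (coord_subgroup I)"
    unfolding derived_def by (rule generate.one)
  ultimately show ?thesis by blast
qed

lemma coordinate_character:
  fixes \<phi> :: "'a \<Rightarrow> complex"
  assumes law: "closed_additive coord_mul I a" and a: "a \<in> {1..12}"
    and \<phi>_add: "\<And>u v. \<phi> (u + v) = \<phi> u * \<phi> v" and \<phi>_nz: "\<And>u. \<phi> u \<noteq> 0"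
  shows "\<exists>chi. lin_char G (coord_subgroup I) chi \<and> (\<forall>t. chi (x a t) = \<phi> (s * t))
    \<and> (\<forall>j\<in>{1..12} - I - {a}. \<forall>t. x j t \<in> coord_subgroup I \<and> chi (x j t) = 1)"
proof (intro exI conjI ballI allI)
  show "lin_char G (coord_subgroup I) (\<lambda>g. \<phi> (s * coord g a))"
    unfolding lin_char_def using coord_subgroup_mult(2)[OF law _ _ a] \<phi>_add \<phi>_nz
    by (simp add: distrib_left)
  show "\<phi> (s * coord (x a t) a) = \<phi> (s * t)" for t
    using a by (simp add: coord_x)
  fix j t assume j: "j \<in> {1..12} - I - {a}"
  then show "x j t \<in> coord_subgroup I"
    by (intro x_in_coord_subgroup) auto
  have "\<phi> 0 = 1"
    using \<phi>_add[of 0 0] \<phi>_nz[of 0] by simp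
  then show "\<phi> (s * coord (x j t) a) = 1"
    using j a by (simp add: coord_x)
qed

end

theorem lemma3p1:
  fixes G :: "('g, 'b) monoid_scheme"
    and x :: "nat \<Rightarrow> 'a::{field,finite} \<Rightarrow> 'g"
    and \<phi> :: "'a \<Rightarrow> complex"
    and a :: nat
  assumes U: "is_U_D4 G x"
    and phi: "nontriv_add_char \<phi>"
    and a: "a \<in> {1..12}"
  defines "V \<equiv> rootprod G x (Phi_plus - leg (pos_root a))"
  shows "closed (Phi_plus - leg (pos_root a))
    \<and> subgroup V G
    \<and> Xsub x a \<inter> derived G V = {\<one>\<^bsub>G\<^esub>}
    \<and> (\<forall>s::'a. s \<noteq> 0 \<longrightarrow> (\<exists>chi. lin_char G V chi
          \<and> (\<forall>t. chi (x a t) = \<phi> (s * t))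
          \<and> (\<forall>j\<in>{1..12}. ht (pos_root j) > ht (pos_root a) \<longrightarrow>
                (\<forall>t. x j t \<in> V \<and> chi (x j t) = 1))))"
proof -
  interpret UD4 G x by (rule UD4.intro[OF U])
  have V_eq: "V = coord_subgroup (leg_index a)"
    unfolding V_def rootprod_eq_coord_subgroup leg_index_complement ..
  have law: "closed_additive coord_mul (leg_index a) a"
    using closed_additive_leg[OF a] .
  have \<phi>_add: "\<And>u v. \<phi> (u + v) = \<phi> u * \<phi> v" and \<phi>_nz: "\<And>u. \<phi> u \<noteq> 0"
    using phi unfolding nontriv_add_char_def by auto
  have higher: "j \<in> {1..12} - leg_index a - {a}"
    if "j \<in> {1..12}" "ht (pos_root j) > ht (pos_root a)" for j
    using that higher_root_not_in_leg unfolding leg_index_def by auto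
  have character: "\<exists>chi. lin_char G V chi \<and> (\<forall>t. chi (x a t) = \<phi> (s * t))
      \<and> (\<forall>j\<in>{1..12}. ht (pos_root j) > ht (pos_root a) \<longrightarrow>
            (\<forall>t. x j t \<in> V \<and> chi (x j t) = 1))" for s
  proof -
    obtain chi where "lin_char G V chi" "\<forall>t. chi (x a t) = \<phi> (s * t)"
      and trivial: "\<forall>j\<in>{1..12} - leg_index a - {a}. \<forall>t. x j t \<in> V \<and> chi (x j t) = 1"
      using coordinate_character[where \<phi> = \<phi> and s = s, OF law a \<phi>_add \<phi>_nz] unfolding V_eq by blast
    then show ?thesis
      using higher by (intro exI[of _ chi]) simp
  qed
  show ?thesis
    using closed_leg_complement[OF a] coord_subgroup_is_subgroup[OF law] character
      root_subgroup_meets_derived_trivially[OF law a]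
    unfolding V_eq by blast
qed

end
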